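(* Let $p(x)=\frac1{\sqrt{2\pi}}e^{-x^2/2}$ be the density of $N(0,1)$ on $\mathbb{R}$. There exists an absolute constant $C$ such that for every $\varepsilon>0$ there exists a probability density $q$ on $\mathbb{R}$ such that (1) $\ln q$ is $C$-smooth (i.e. $(\ln q)'$ is $C$-Lipschitz); (2) $\mathbb{E}_p\big[|(\ln p)'(x)-(\ln q)'(x)|^2\big]<\varepsilon$; (3) $\mathrm{TV}(p,q)>1-\varepsilon$. *)

theory Defs
  imports "HOL-Probability.Probability"
begin

text \<open>A probability density on the real line (w.r.t. Lebesgue measure) with
  everywhere positive values, so that its logarithm is defined everywhere.\<close>
definition pos_prob_density :: "(real \<Rightarrow> real) \<Rightarrow> bool" where
  "pos_prob_density q \<longleftrightarrow> (\<forall>x. q x > 0) \<and> integrable lborel q \<and> (\<integral>x. q x \<partial>lborel) = 1"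

definition tv_dist :: "(real \<Rightarrow> real) \<Rightarrow> (real \<Rightarrow> real) \<Rightarrow> real" where
  "tv_dist p q = (1/2) * (\<integral>x. \<bar>p x - q x\<bar> \<partial>lborel)"

definition score :: "(real \<Rightarrow> real) \<Rightarrow> real \<Rightarrow> real" where
  "score q x = deriv (\<lambda>t. ln (q t)) x"

end

theory Submission
  imports Defs "HOL-Real_Asymp.Real_Asymp"
begin

text \<open>Let V agree with the Gaussian potential x^2/2 up to R, bend it down with V'' = -1
  until its slope has dropped to a small d > 0 at 2R - d, and continue it linearly.  Then V'
  is Lipschitz and equals the Gaussian score on (-\<infinity>, R], so the score error only sees the
  Gaussian tail beyond R.  But the linear tail of exp(-V) alone has mass at least exp(-R^2)/d,
  so for d much smaller than exp(-R^2) the density proportional to exp(-V) lives almost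
  entirely on [R, \<infinity>), where the Gaussian has almost no mass.\<close>

lemma has_real_derivative_max0_square:
  "((\<lambda>x::real. (max 0 x)\<^sup>2) has_real_derivative 2 * max 0 x) (at x)"
proof (cases "x = 0")
  case True
  have "(\<lambda>h::real. ((max 0 (x + h))\<^sup>2 - (max 0 x)\<^sup>2) / h) = (\<lambda>h. max 0 h)"
    using True by (auto simp: fun_eq_iff max_def power2_eq_square)
  moreover have "((\<lambda>h::real. max 0 h) \<longlongrightarrow> max 0 0) (at 0)"
    by (intro tendsto_intros)
  ultimately show ?thesis
    unfolding DERIV_def using True by simp
next
  case False
  then consider "x > 0" | "x < 0" by linarith
  then show ?thesis
  proof cases
    case 1
    have "eventually (\<lambda>y. (max 0 y)\<^sup>2 = y\<^sup>2) (nhds x)"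
      using order_tendstoD(1)[OF filterlim_ident 1] by (rule eventually_mono) simp
    moreover have "((\<lambda>x::real. x\<^sup>2) has_real_derivative 2 * x) (at x)"
      by (auto intro!: derivative_eq_intros)
    ultimately show ?thesis
      using 1 DERIV_cong_ev by fastforce
  next
    case 2
    have "eventually (\<lambda>y. (max 0 y)\<^sup>2 = (0::real)) (nhds x)"
      using order_tendstoD(2)[OF filterlim_ident 2] by (rule eventually_mono) simp
    then have "((\<lambda>y. (max 0 y)\<^sup>2) has_real_derivative 0) (at x)
        \<longleftrightarrow> ((\<lambda>y. 0::real) has_real_derivative 0) (at x)"
      by (rule DERIV_cong_ev[OF refl _ refl])
    then show ?thesis
      using 2 by simp
  qed
qed

lemma has_real_derivative_max0_square_shift:
  "((\<lambda>x::real. (max 0 (x - c))\<^sup>2) has_real_derivative 2 * max 0 (x - c)) (at x)"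
  using DERIV_chain2[OF has_real_derivative_max0_square DERIV_diff[OF DERIV_ident DERIV_const]]
  by simp

lemma lipschitz_on_max0_shift: "1-lipschitz_on U (\<lambda>x::real. max 0 (x - c))"
  by (rule lipschitz_onI) (auto simp: dist_real_def max_def)

lemma has_bochner_integral_exp_linear_tail:
  fixes a d :: real
  assumes "0 < d"
  shows "has_bochner_integral lborel (\<lambda>x. exp (- d * (x - a)) * indicator {a..} x) (1 / d)"
proof (rule has_bochner_integral_nn_integral)
  have "(\<integral>\<^sup>+x. ennreal (exp (- d * (x - a))) * indicator {a..} x \<partial>lborel)
      = 0 - (- exp (- d * (a - a)) / d)"
  proof (rule nn_integral_FTC_atLeast[where F = "\<lambda>x. - exp (- d * (x - a)) / d"])
    show "((\<lambda>x. - exp (- d * (x - a)) / d) has_real_derivative exp (- d * (x - a))) (at x)"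
      if "a \<le> x" for x
      using \<open>0 < d\<close> by (auto intro!: derivative_eq_intros)
    show "((\<lambda>x. - exp (- d * (x - a)) / d) \<longlongrightarrow> 0) at_top"
      using \<open>0 < d\<close> by real_asymp
  qed auto
  then show "(\<integral>\<^sup>+x. ennreal (exp (- d * (x - a)) * indicator {a..} x) \<partial>lborel) = ennreal (1 / d)"
    by (simp add: indicator_mult_ennreal mult.commute)
qed (use assms in auto)

lemma score_std_normal_density: "score std_normal_density x = - x"
proof -
  have "(\<lambda>t. ln (std_normal_density t)) = (\<lambda>t. ln (1 / sqrt (2*pi)) - t\<^sup>2/2)"
    by (auto simp: fun_eq_iff std_normal_density_def ln_div)
  moreover have "((\<lambda>t. ln (1 / sqrt (2*pi)) - t\<^sup>2/2) has_real_derivative - x) (at x)"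
    by (auto intro!: derivative_eq_intros)
  ultimately show ?thesis
    unfolding score_def by (simp add: DERIV_imp_deriv)
qed

lemma tv_dist_ge_mass_split:
  fixes p q :: "real \<Rightarrow> real"
  assumes p: "integrable lborel p" "(\<integral>x. p x \<partial>lborel) = 1"
    and q: "integrable lborel q" "(\<integral>x. q x \<partial>lborel) = 1"
    and A: "A \<in> sets borel"
  shows "1 - (\<integral>x. q x * indicator A x \<partial>lborel) - (\<integral>x. p x * indicator (- A) x \<partial>lborel)
    \<le> tv_dist p q"
proof -
  have qA: "integrable lborel (\<lambda>x. q x * indicator A x)"
    using q A by (intro integrable_real_mult_indicator) auto
  have pA: "integrable lborel (\<lambda>x. p x * indicator (- A) x)"
    using p A by (intro integrable_real_mult_indicator) auto
  have "2 - 2 * (\<integral>x. q x * indicator A x \<partial>lborel) - 2 * (\<integral>x. p x * indicator (- A) x \<partial>lborel)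
      = (\<integral>x. p x + q x - 2 * (q x * indicator A x) - 2 * (p x * indicator (- A) x) \<partial>lborel)"
    using p q qA pA by simp
  also have "\<dots> \<le> (\<integral>x. \<bar>p x - q x\<bar> \<partial>lborel)"
    using p q qA pA by (intro integral_mono) (auto simp: indicator_def)
  finally show ?thesis
    unfolding tv_dist_def by linarith
qed

lemma tendsto_integral_indicator_atLeast:
  fixes f :: "real \<Rightarrow> real"
  assumes "integrable lborel f"
  shows "((\<lambda>R. \<integral>x. f x * indicator {R..} x \<partial>lborel) \<longlongrightarrow> 0) at_top"
proof -
  have "((\<lambda>R. \<integral>x. f x * indicator {R..} x \<partial>lborel) \<longlongrightarrow> (\<integral>x. (0::real) \<partial>(lborel::real measure))) at_top"
  proof (rule integral_dominated_convergence_at_top[where w = "\<lambda>x. \<bar>f x\<bar>"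
        and s = "\<lambda>R x. f x * indicator {R..} x" and f = "\<lambda>x. 0"])
    show "AE x in lborel. ((\<lambda>R. f x * indicator {R..} x) \<longlongrightarrow> 0) at_top"
    proof (rule AE_I2)
      fix x
      have "eventually (\<lambda>R. f x * indicator {R..} x = 0) at_top"
        using eventually_gt_at_top[of x] by eventually_elim (simp add: indicator_def)
      then show "((\<lambda>R. f x * indicator {R..} x) \<longlongrightarrow> 0) at_top"
        by (rule tendsto_eventually)
    qed
  qed (use assms borel_measurable_integrable in \<open>auto simp: indicator_def\<close>)
  then show ?thesis
    by simp
qed

lemma std_normal_tails_small:
  fixes e :: real
  assumes "0 < e"
  obtains R where "0 < R"
    "(\<integral>x. std_normal_density x * x\<^sup>2 * indicator {R..} x \<partial>lborel) < e"
    "(\<integral>x. std_normal_density x * indicator {R..} x \<partial>lborel) < e"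
proof -
  have "eventually (\<lambda>R. (\<integral>x. std_normal_density x * x\<^sup>2 * indicator {R..} x \<partial>lborel) < e) at_top"
    using assms by (intro order_tendstoD(2)[OF tendsto_integral_indicator_atLeast]
        integrable_std_normal_moment)
  moreover have "eventually (\<lambda>R. (\<integral>x. std_normal_density x * indicator {R..} x \<partial>lborel) < e) at_top"
    using assms by (intro order_tendstoD(2)[OF tendsto_integral_indicator_atLeast]
        integrable_normal_density) simp
  ultimately have "eventually (\<lambda>R. 0 < R
      \<and> (\<integral>x. std_normal_density x * x\<^sup>2 * indicator {R..} x \<partial>lborel) < e
      \<and> (\<integral>x. std_normal_density x * indicator {R..} x \<partial>lborel) < e) at_top"
    using eventually_gt_at_top[of 0] by eventually_elim simp
  then show ?thesis
    using that unfolding eventually_at_top_linorder by (blast intro: order.refl)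
qed

definition escape_potential :: "real \<Rightarrow> real \<Rightarrow> real \<Rightarrow> real" where
  "escape_potential R d x = x\<^sup>2/2 - (max 0 (x - R))\<^sup>2 + (max 0 (x - (2*R - d)))\<^sup>2/2"

definition escape_potential_deriv :: "real \<Rightarrow> real \<Rightarrow> real \<Rightarrow> real" where
  "escape_potential_deriv R d x = x - 2 * max 0 (x - R) + max 0 (x - (2*R - d))"

definition escape_density :: "real \<Rightarrow> real \<Rightarrow> real \<Rightarrow> real" where
  "escape_density R d x =
     exp (- escape_potential R d x) / (\<integral>t. exp (- escape_potential R d t) \<partial>lborel)"

lemma escape_potential_measurable [measurable]: "escape_potential R d \<in> borel_measurable borel"
  unfolding escape_potential_def[abs_def] by measurable

lemma escape_potential_has_real_derivative:
  "(escape_potential R d has_real_derivative escape_potential_deriv R d x) (at x)"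
proof -
  have "((\<lambda>x. x\<^sup>2/2 - (max 0 (x - R))\<^sup>2 + (max 0 (x - (2*R - d)))\<^sup>2/2) has_real_derivative
      x - 2 * max 0 (x - R) + 2 * max 0 (x - (2*R - d)) / 2) (at x)"
    by (intro DERIV_add DERIV_diff DERIV_cdivide has_real_derivative_max0_square_shift)
      (auto intro!: derivative_eq_intros)
  then show ?thesis
    unfolding escape_potential_def[abs_def] escape_potential_deriv_def by simp
qed

lemma lipschitz_escape_potential_deriv: "4-lipschitz_on U (escape_potential_deriv R d)"
proof -
  have "(1 + \<bar>2\<bar> * 1 + 1)-lipschitz_on U
      (\<lambda>x. x - 2 * max 0 (x - R) + max 0 (x - (2*R - d)))"
    by (intro lipschitz_intros lipschitz_on_max0_shift)
  then show ?thesis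
    unfolding escape_potential_deriv_def[abs_def] by simp
qed

context
  fixes R d :: real
  assumes d: "0 < d" "d \<le> R"
begin

lemma escape_potential_below: "x \<le> R \<Longrightarrow> escape_potential R d x = x\<^sup>2/2"
  using d unfolding escape_potential_def by (auto simp: max_def)

lemma escape_potential_deriv_below: "x \<le> R \<Longrightarrow> escape_potential_deriv R d x = x"
  using d unfolding escape_potential_deriv_def by (auto simp: max_def)

lemma escape_potential_middle_nonneg:
  assumes "R \<le> x" "x \<le> 2*R - d"
  shows "0 \<le> escape_potential R d x"
proof -
  have "(x - R)\<^sup>2 \<le> (x/2)\<^sup>2"
    using assms d by (intro power_mono) auto
  then have "(x - R)\<^sup>2 \<le> x\<^sup>2/4"
    by (simp add: power_divide)
  moreover have "escape_potential R d x = x\<^sup>2/2 - (x - R)\<^sup>2"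
    using assms unfolding escape_potential_def by (simp add: max_def)
  moreover have "0 \<le> x\<^sup>2"
    by simp
  ultimately show ?thesis
    by linarith
qed

lemma escape_potential_above:
  "2*R - d \<le> x \<Longrightarrow> escape_potential R d x = R\<^sup>2 - d\<^sup>2/2 + d * (x - (2*R - d))"
  using d unfolding escape_potential_def by (simp add: max_def power2_eq_square field_simps)

lemma escape_potential_deriv_gap_le:
  "(escape_potential_deriv R d x - x)\<^sup>2 \<le> 4 * x\<^sup>2 * indicator {R..} x"
proof (cases "x \<le> R")
  case False
  then have "\<bar>escape_potential_deriv R d x - x\<bar> \<le> \<bar>2 * x\<bar>"
    using d unfolding escape_potential_deriv_def by (auto simp: max_def)
  then have "(escape_potential_deriv R d x - x)\<^sup>2 \<le> (2 * x)\<^sup>2"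
    by (simp add: abs_le_square_iff)
  then show ?thesis
    using False by (simp add: power_mult_distrib)
qed (simp add: escape_potential_deriv_below)

lemma exp_neg_escape_potential_below:
  "x \<le> R \<Longrightarrow> exp (- escape_potential R d x) = sqrt (2*pi) * std_normal_density x"
  by (simp add: escape_potential_below std_normal_density_def)

lemma exp_neg_escape_potential_above:
  "2*R - d \<le> x \<Longrightarrow>
    exp (- escape_potential R d x) = exp (d\<^sup>2/2 - R\<^sup>2) * exp (- d * (x - (2*R - d)))"
  by (simp add: escape_potential_above flip: exp_add)

lemma integrable_exp_neg_escape_potential:
  "integrable lborel (\<lambda>x. exp (- escape_potential R d x))"
proof (rule Bochner_Integration.integrable_bound)
  let ?tail = "\<lambda>x. exp (d\<^sup>2/2 - R\<^sup>2) * (exp (- d * (x - (2*R - d))) * indicator {2*R - d..} x)"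
  let ?G = "\<lambda>x. sqrt (2*pi) * std_normal_density x + indicator {R..2*R - d} x + ?tail x"
  show "integrable lborel ?G"
    using d has_bochner_integral_exp_linear_tail[of d "2*R - d"]
    by (intro Bochner_Integration.integrable_add integrable_mult_right integrable_normal_density
        integrable_real_indicator) (auto simp: has_bochner_integral_iff)
  show "AE x in lborel. norm (exp (- escape_potential R d x)) \<le> norm (?G x)"
  proof (rule AE_I2)
    fix x
    have parts: "0 \<le> sqrt (2*pi) * std_normal_density x"
      "0 \<le> (indicator {R..2*R - d} x :: real)" "0 \<le> ?tail x"
      by auto
    consider "x \<le> R" | "R \<le> x" "x \<le> 2*R - d" | "2*R - d \<le> x"
      by linarith
    then have "exp (- escape_potential R d x) \<le> ?G x"
    proof cases
      case 1
      then show ?thesis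
        using parts exp_neg_escape_potential_below[OF 1] by linarith
    next
      case 2
      then have "exp (- escape_potential R d x) \<le> indicator {R..2*R - d} x"
        using escape_potential_middle_nonneg[OF 2] by simp
      then show ?thesis
        using parts by linarith
    next
      case 3
      then have "?tail x = exp (- escape_potential R d x)"
        by (simp add: exp_neg_escape_potential_above)
      then show ?thesis
        using parts by linarith
    qed
    with parts show "norm (exp (- escape_potential R d x)) \<le> norm (?G x)"
      by simp
  qed
qed simp

lemma escape_normalizer_ge: "exp (- R\<^sup>2) / d \<le> (\<integral>x. exp (- escape_potential R d x) \<partial>lborel)"
proof -
  have "exp (- R\<^sup>2) / d \<le> exp (d\<^sup>2/2 - R\<^sup>2) * (1 / d)"
    using d by (simp add: divide_right_mono)
  also have "\<dots> = (\<integral>x. exp (d\<^sup>2/2 - R\<^sup>2) *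
      (exp (- d * (x - (2*R - d))) * indicator {2*R - d..} x) \<partial>lborel)"
    using has_bochner_integral_integral_eq[OF has_bochner_integral_exp_linear_tail[OF d(1)]] by simp
  also have "\<dots> = (\<integral>x. exp (- escape_potential R d x) * indicator {2*R - d..} x \<partial>lborel)"
    by (intro Bochner_Integration.integral_cong)
      (auto simp: exp_neg_escape_potential_above indicator_def)
  also have "\<dots> \<le> (\<integral>x. exp (- escape_potential R d x) \<partial>lborel)"
    by (intro integral_mono integrable_real_mult_indicator integrable_exp_neg_escape_potential)
      (auto simp: indicator_def)
  finally show ?thesis .
qed

lemma escape_normalizer_pos: "0 < (\<integral>x. exp (- escape_potential R d x) \<partial>lborel)"
  by (rule less_le_trans[OF _ escape_normalizer_ge]) (use d in simp)

lemma pos_prob_density_escape_density: "pos_prob_density (escape_density R d)"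
  using escape_normalizer_pos integrable_exp_neg_escape_potential
  unfolding pos_prob_density_def escape_density_def[abs_def] by simp

lemma has_real_derivative_ln_escape_density:
  "((\<lambda>t. ln (escape_density R d t)) has_real_derivative - escape_potential_deriv R d x) (at x)"
proof -
  let ?Z = "\<integral>t. exp (- escape_potential R d t) \<partial>lborel"
  have "(\<lambda>t. ln (escape_density R d t)) = (\<lambda>t. - escape_potential R d t - ln ?Z)"
    using escape_normalizer_pos by (auto simp: fun_eq_iff escape_density_def ln_div)
  moreover have "((\<lambda>t. - escape_potential R d t - ln ?Z) has_real_derivative
      - escape_potential_deriv R d x - 0) (at x)"
    by (intro DERIV_diff DERIV_minus escape_potential_has_real_derivative DERIV_const)
  ultimately show ?thesis
    by simp
qed

lemma score_escape_density: "score (escape_density R d) x = - escape_potential_deriv R d x"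
  unfolding score_def by (rule DERIV_imp_deriv[OF has_real_derivative_ln_escape_density])

lemma differentiable_ln_escape_density: "(\<lambda>t. ln (escape_density R d t)) differentiable (at x)"
  using has_real_derivative_ln_escape_density real_differentiable_def by blast

lemma lipschitz_score_escape_density: "4-lipschitz_on U (score (escape_density R d))"
  using lipschitz_escape_potential_deriv by (simp add: score_escape_density[abs_def])

lemma escape_density_score_error_le:
  "(\<integral>\<^sup>+x. ennreal (std_normal_density x *
        (score std_normal_density x - score (escape_density R d) x)\<^sup>2) \<partial>lborel)
    \<le> ennreal (4 * (\<integral>x. std_normal_density x * x\<^sup>2 * indicator {R..} x \<partial>lborel))"
proof -
  have "(\<integral>\<^sup>+x. ennreal (std_normal_density x *
        (score std_normal_density x - score (escape_density R d) x)\<^sup>2) \<partial>lborel)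
      \<le> (\<integral>\<^sup>+x. ennreal (4 * (std_normal_density x * x\<^sup>2 * indicator {R..} x)) \<partial>lborel)"
  proof (intro nn_integral_mono ennreal_leI)
    fix x
    have "std_normal_density x * (escape_potential_deriv R d x - x)\<^sup>2
        \<le> std_normal_density x * (4 * x\<^sup>2 * indicator {R..} x)"
      by (intro mult_left_mono escape_potential_deriv_gap_le) simp
    then show "std_normal_density x * (score std_normal_density x - score (escape_density R d) x)\<^sup>2
        \<le> 4 * (std_normal_density x * x\<^sup>2 * indicator {R..} x)"
      by (simp add: score_std_normal_density score_escape_density power2_commute)
  qed
  also have "\<dots> = ennreal (\<integral>x. 4 * (std_normal_density x * x\<^sup>2 * indicator {R..} x) \<partial>lborel)"
    by (intro nn_integral_eq_integral integrable_mult_right integrable_real_mult_indicator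
        integrable_std_normal_moment) (auto simp: indicator_def)
  finally show ?thesis
    by simp
qed

lemma escape_density_mass_below:
  "(\<integral>x. escape_density R d x * indicator {..<R} x \<partial>lborel) \<le> sqrt (2*pi) * d * exp (R\<^sup>2)"
proof -
  let ?Z = "\<integral>t. exp (- escape_potential R d t) \<partial>lborel"
  have "escape_density R d x * indicator {..<R} x \<le> sqrt (2*pi) / ?Z * std_normal_density x"
    for x
    using escape_normalizer_pos
    by (auto simp: escape_density_def exp_neg_escape_potential_below indicator_def)
  then have "(\<integral>x. escape_density R d x * indicator {..<R} x \<partial>lborel)
      \<le> (\<integral>x. sqrt (2*pi) / ?Z * std_normal_density x \<partial>lborel)"
    using pos_prob_density_escape_density
    by (intro integral_mono integrable_real_mult_indicator integrable_mult_right
        integrable_normal_density) (auto simp: pos_prob_density_def)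
  also have "\<dots> = sqrt (2*pi) / ?Z"
    by simp
  also have "\<dots> \<le> sqrt (2*pi) / (exp (- R\<^sup>2) / d)"
    using escape_normalizer_ge escape_normalizer_pos d by (intro divide_left_mono) auto
  also have "\<dots> = sqrt (2*pi) * d * exp (R\<^sup>2)"
    by (simp add: exp_minus field_simps)
  finally show ?thesis .
qed

lemma tv_dist_escape_density_ge:
  "1 - sqrt (2*pi) * d * exp (R\<^sup>2) - (\<integral>x. std_normal_density x * indicator {R..} x \<partial>lborel)
    \<le> tv_dist std_normal_density (escape_density R d)"
proof -
  have "1 - (\<integral>x. escape_density R d x * indicator {..<R} x \<partial>lborel)
      - (\<integral>x. std_normal_density x * indicator (- {..<R}) x \<partial>lborel)
    \<le> tv_dist std_normal_density (escape_density R d)"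
    using pos_prob_density_escape_density
    by (intro tv_dist_ge_mass_split) (auto simp: pos_prob_density_def)
  then show ?thesis
    using escape_density_mass_below unfolding Compl_lessThan by linarith
qed

end

theorem theorem12:
  shows "\<exists>C::real. \<forall>\<epsilon>>0. \<exists>q :: real \<Rightarrow> real.
     pos_prob_density q \<and>
     (\<forall>x. (\<lambda>t. ln (q t)) differentiable (at x)) \<and>
     C-lipschitz_on UNIV (score q) \<and>
     (\<integral>\<^sup>+x. ennreal (std_normal_density x * (score std_normal_density x - score q x)\<^sup>2) \<partial>lborel) < ennreal \<epsilon> \<and>
     tv_dist std_normal_density q > 1 - \<epsilon>"
proof (intro exI[of _ 4] allI impI)
  fix e :: real
  assume e: "0 < e"
  let ?p = std_normal_density
  obtain R where R: "0 < R"
    and score_tail: "(\<integral>x. ?p x * x\<^sup>2 * indicator {R..} x \<partial>lborel) < e/4"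
    and mass_tail: "(\<integral>x. ?p x * indicator {R..} x \<partial>lborel) < e/4"
    using std_normal_tails_small[of "e/4"] e by auto
  define d where "d = min R (e / (2 * sqrt (2*pi) * exp (R\<^sup>2)))"
  have d: "0 < d" "d \<le> R"
    using R e by (simp_all add: d_def)
  have "sqrt (2*pi) * d * exp (R\<^sup>2) \<le> sqrt (2*pi) * (e / (2 * sqrt (2*pi) * exp (R\<^sup>2))) * exp (R\<^sup>2)"
    by (intro mult_right_mono mult_left_mono) (simp_all add: d_def)
  also have "\<dots> = e/2"
    by (simp add: field_simps)
  finally have "1 - e < tv_dist ?p (escape_density R d)"
    using tv_dist_escape_density_ge[OF d] mass_tail e by linarith
  moreover have "(\<integral>\<^sup>+x. ennreal (?p x * (score ?p x - score (escape_density R d) x)\<^sup>2) \<partial>lborel)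
      < ennreal e"
    using score_tail e
    by (intro le_less_trans[OF escape_density_score_error_le[OF d]] ennreal_lessI) simp_all
  ultimately show "\<exists>q. pos_prob_density q \<and> (\<forall>x. (\<lambda>t. ln (q t)) differentiable at x) \<and>
      4-lipschitz_on UNIV (score q) \<and>
      (\<integral>\<^sup>+x. ennreal (?p x * (score ?p x - score q x)\<^sup>2) \<partial>lborel) < ennreal e \<and>
      1 - e < tv_dist ?p q"
    using pos_prob_density_escape_density[OF d] differentiable_ln_escape_density[OF d]
      lipschitz_score_escape_density[OF d] by blast
qed

end
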